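(* Let $M$ be a pointed metric space and assume that $\mu_0\in B_{\mathcal F(M)}$ is not an extreme point of $B_{\mathcal F(M)}$. Then there is a separable subset $N\subset M$ containing the origin $0$ such that $\mu_0\in\mathcal F(N)$ and $\mu_0$ is not an extreme point of $B_{\mathcal F(N)}$.
   Context: A pointed metric space $M$ has a distinguished origin $0$. $\mathrm{Lip}_0(M)$ is the Banach space of real Lipschitz functions on $M$ vanishing at $0$ with the best Lipschitz constant as norm; $\delta(x)$ is evaluation at $x$, and the Lipschitz free space $\mathcal F(M)$ is the closed linear span of $\delta(M)$ in $\mathrm{Lip}_0(M)^*$. For $0\in N\subset M$, $\mathcal F(N)$ is identified (isometrically, via the canonical inclusion) with the closed linear span of $\{\delta(x):x\in N\}$ in $\mathcal F(M)$. *)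

theory Defs
  imports "HOL-Analysis.Analysis"
begin

text \<open>Lip_0(M): real functions Lipschitz on M vanishing at z0 (only values on M matter).
  Elements of Lip_0(M)^* are represented as functionals on functions, required to be
  zero outside Lip_0(M) so that equality of functionals is equality on Lip_0(M).\<close>

definition lip0 :: "'a::metric_space set \<Rightarrow> 'a \<Rightarrow> ('a \<Rightarrow> real) set" where
  "lip0 M z0 = {f. (\<exists>C. lipschitz_on C M f) \<and> f z0 = 0}"

definition lipball :: "'a::metric_space set \<Rightarrow> 'a \<Rightarrow> ('a \<Rightarrow> real) set" where
  "lipball M z0 = {f. lipschitz_on 1 M f \<and> f z0 = 0}"

definition mol_span :: "'a::metric_space set \<Rightarrow> 'a \<Rightarrow> 'a set \<Rightarrow> (('a \<Rightarrow> real) \<Rightarrow> real) set" where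
  "mol_span M z0 N = {\<nu>. \<exists>S c. finite S \<and> S \<subseteq> N \<and>
      \<nu> = (\<lambda>f. if f \<in> lip0 M z0 then (\<Sum>x\<in>S. c x * f x) else 0)}"

text \<open>F(N) as the closed linear span of delta(N) in Lip_0(M)^* (dual norm), for N \<subseteq> M.
  Closure is expressed as: a linear functional on Lip_0(M) approximable in dual norm.\<close>
definition free_space :: "'a::metric_space set \<Rightarrow> 'a \<Rightarrow> 'a set \<Rightarrow> (('a \<Rightarrow> real) \<Rightarrow> real) set" where
  "free_space M z0 N = {\<mu>.
      (\<forall>f. f \<notin> lip0 M z0 \<longrightarrow> \<mu> f = 0) \<and>
      (\<forall>f\<in>lip0 M z0. \<forall>g\<in>lip0 M z0. \<mu> (\<lambda>x. f x + g x) = \<mu> f + \<mu> g) \<and>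
      (\<forall>a. \<forall>f\<in>lip0 M z0. \<mu> (\<lambda>x. a * f x) = a * \<mu> f) \<and>
      (\<forall>\<epsilon>>0. \<exists>\<nu>\<in>mol_span M z0 N. \<forall>f\<in>lipball M z0. \<bar>\<mu> f - \<nu> f\<bar> \<le> \<epsilon>)}"

definition free_ball :: "'a::metric_space set \<Rightarrow> 'a \<Rightarrow> 'a set \<Rightarrow> (('a \<Rightarrow> real) \<Rightarrow> real) set" where
  "free_ball M z0 N = {\<mu> \<in> free_space M z0 N. \<forall>f\<in>lipball M z0. \<bar>\<mu> f\<bar> \<le> 1}"

definition is_extreme_point :: "(('a \<Rightarrow> real) \<Rightarrow> real) set \<Rightarrow> (('a \<Rightarrow> real) \<Rightarrow> real) \<Rightarrow> bool" where
  "is_extreme_point B \<mu> \<longleftrightarrow> \<mu> \<in> B \<and>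
     \<not> (\<exists>\<mu>1\<in>B. \<exists>\<mu>2\<in>B. \<mu>1 \<noteq> \<mu>2 \<and> \<mu> = (\<lambda>f. (\<mu>1 f + \<mu>2 f) / 2))"

definition separable_set :: "'a::metric_space set \<Rightarrow> bool" where
  "separable_set N \<longleftrightarrow> (\<exists>D. countable D \<and> D \<subseteq> N \<and> N \<subseteq> closure D)"

end

theory Submission
  imports Defs
begin

text \<open>Every element of \<open>\<F>(N)\<close> is a limit of a sequence of finitely supported molecules, so it
  already lies in \<open>\<F>(C)\<close> for the countable union \<open>C\<close> of their supports. Writing a non-extreme
  \<open>\<mu>\<^sub>0\<close> as the midpoint of \<open>\<mu>\<^sub>1 \<noteq> \<mu>\<^sub>2\<close> in the ball, the countable set \<open>N\<close> containing the
  origin and the supports of \<open>\<mu>\<^sub>0, \<mu>\<^sub>1, \<mu>\<^sub>2\<close> is separable, and the same decomposition shows that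
  \<open>\<mu>\<^sub>0\<close> is not extreme in the ball of \<open>\<F>(N)\<close>, whose norm is inherited from \<open>\<F>(M)\<close>.\<close>

lemma free_spaceD_approx:
  assumes "\<mu> \<in> free_space M z0 N" "\<epsilon> > 0"
  shows "\<exists>\<nu>\<in>mol_span M z0 N. \<forall>f\<in>lipball M z0. \<bar>\<mu> f - \<nu> f\<bar> \<le> \<epsilon>"
  using assms unfolding free_space_def by simp

lemma free_space_change_support:
  assumes "\<mu> \<in> free_space M z0 N'"
    and "\<And>\<epsilon>. \<epsilon> > 0 \<Longrightarrow> \<exists>\<nu>\<in>mol_span M z0 N. \<forall>f\<in>lipball M z0. \<bar>\<mu> f - \<nu> f\<bar> \<le> \<epsilon>"
  shows "\<mu> \<in> free_space M z0 N"
  using assms unfolding free_space_def by simp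

lemma mol_span_mono:
  assumes "N \<subseteq> N'" "\<nu> \<in> mol_span M z0 N"
  shows "\<nu> \<in> mol_span M z0 N'"
  using assms unfolding mol_span_def by blast

lemma mol_span_finite_support:
  assumes "\<nu> \<in> mol_span M z0 N"
  obtains S where "finite S" "S \<subseteq> N" "\<nu> \<in> mol_span M z0 S"
  using assms unfolding mol_span_def by blast

lemma free_space_mono:
  assumes "N \<subseteq> N'" "\<mu> \<in> free_space M z0 N"
  shows "\<mu> \<in> free_space M z0 N'"
proof (rule free_space_change_support[OF assms(2)])
  fix \<epsilon> :: real
  assume "\<epsilon> > 0"
  then show "\<exists>\<nu>\<in>mol_span M z0 N'. \<forall>f\<in>lipball M z0. \<bar>\<mu> f - \<nu> f\<bar> \<le> \<epsilon>"
    using free_spaceD_approx[OF assms(2)] mol_span_mono[OF assms(1)] by blast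
qed

lemma free_space_countable_support:
  assumes "\<mu> \<in> free_space M z0 N"
  obtains C where "countable C" "C \<subseteq> N" "\<mu> \<in> free_space M z0 C"
proof -
  have "\<forall>n::nat. \<exists>\<nu> S. finite S \<and> S \<subseteq> N \<and> \<nu> \<in> mol_span M z0 S \<and>
          (\<forall>f\<in>lipball M z0. \<bar>\<mu> f - \<nu> f\<bar> \<le> inverse (Suc n))"
  proof
    fix n :: nat
    obtain \<nu> where "\<nu> \<in> mol_span M z0 N" "\<forall>f\<in>lipball M z0. \<bar>\<mu> f - \<nu> f\<bar> \<le> inverse (Suc n)"
      using free_spaceD_approx[OF assms, of "inverse (Suc n)"] by auto
    then show "\<exists>\<nu> S. finite S \<and> S \<subseteq> N \<and> \<nu> \<in> mol_span M z0 S \<and>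
                 (\<forall>f\<in>lipball M z0. \<bar>\<mu> f - \<nu> f\<bar> \<le> inverse (Suc n))"
      by (metis mol_span_finite_support)
  qed
  then obtain V S where VS: "\<And>n. finite (S n)" "\<And>n. S n \<subseteq> N" "\<And>n. V n \<in> mol_span M z0 (S n)"
      "\<And>n f. f \<in> lipball M z0 \<Longrightarrow> \<bar>\<mu> f - V n f\<bar> \<le> inverse (Suc n)"
    by metis
  have "\<mu> \<in> free_space M z0 (\<Union>n. S n)"
  proof (rule free_space_change_support[OF assms])
    fix \<epsilon> :: real
    assume "\<epsilon> > 0"
    then obtain n where n: "inverse (Suc n) < \<epsilon>"
      using reals_Archimedean by blast
    have "V n \<in> mol_span M z0 (\<Union>n. S n)"
      using mol_span_mono[OF _ VS(3)] by blast
    moreover have "\<forall>f\<in>lipball M z0. \<bar>\<mu> f - V n f\<bar> \<le> \<epsilon>"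
      using VS(4) n by (meson less_eq_real_def order_trans)
    ultimately show "\<exists>\<nu>\<in>mol_span M z0 (\<Union>n. S n). \<forall>f\<in>lipball M z0. \<bar>\<mu> f - \<nu> f\<bar> \<le> \<epsilon>"
      by blast
  qed
  moreover have "countable (\<Union>n. S n)"
    using VS(1) by (simp add: countable_finite)
  ultimately show thesis
    using that VS(2) by blast
qed

lemma free_ball_eq_Int_free_space:
  assumes "N \<subseteq> M"
  shows "free_ball M z0 N = free_ball M z0 M \<inter> free_space M z0 N"
  using free_space_mono[OF assms] unfolding free_ball_def by blast

lemma countable_imp_separable_set:
  assumes "countable N"
  shows "separable_set N"
  using assms closure_subset unfolding separable_set_def by blast

theorem lemma5p2:
  fixes M :: "'a::metric_space set" and z0 :: 'a and \<mu>0 :: "('a \<Rightarrow> real) \<Rightarrow> real"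
  assumes "z0 \<in> M"
    and "\<mu>0 \<in> free_ball M z0 M"
    and "\<not> is_extreme_point (free_ball M z0 M) \<mu>0"
  shows "\<exists>N. N \<subseteq> M \<and> z0 \<in> N \<and> separable_set N \<and> \<mu>0 \<in> free_space M z0 N \<and>
           \<not> is_extreme_point (free_ball M z0 N) \<mu>0"
proof -
  obtain \<mu>1 \<mu>2 where \<mu>12: "\<mu>1 \<in> free_ball M z0 M" "\<mu>2 \<in> free_ball M z0 M" "\<mu>1 \<noteq> \<mu>2"
      "\<mu>0 = (\<lambda>f. (\<mu>1 f + \<mu>2 f) / 2)"
    using assms(2,3) unfolding is_extreme_point_def by blast
  have "\<mu> \<in> free_space M z0 M" if "\<mu> \<in> free_ball M z0 M" for \<mu>
    using that unfolding free_ball_def by blast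
  then obtain C0 C1 C2 where C: "countable C0" "countable C1" "countable C2" "C0 \<union> C1 \<union> C2 \<subseteq> M"
      "\<mu>0 \<in> free_space M z0 C0" "\<mu>1 \<in> free_space M z0 C1" "\<mu>2 \<in> free_space M z0 C2"
    using free_space_countable_support assms(2) \<mu>12(1,2) by (metis le_sup_iff)
  define N where "N = insert z0 (C0 \<union> C1 \<union> C2)"
  have N: "N \<subseteq> M" "z0 \<in> N" "separable_set N"
    using C(1-4) assms(1) countable_imp_separable_set[of N] unfolding N_def by auto
  have "\<mu>i \<in> free_space M z0 N" if "\<mu>i \<in> free_space M z0 Ci" "Ci \<subseteq> N" for \<mu>i Ci
    using free_space_mono that by blast
  then have "\<mu>0 \<in> free_space M z0 N" "\<mu>1 \<in> free_ball M z0 N" "\<mu>2 \<in> free_ball M z0 N"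
    using C(5-7) \<mu>12(1,2) free_ball_eq_Int_free_space[OF N(1)] unfolding N_def by auto
  then show ?thesis
    using N \<mu>12(3,4) unfolding is_extreme_point_def by blast
qed

end
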